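(* Let $\theta_0\in\mathbb{R}$ and let $\hat\theta_u,\hat\theta_b$ be real random variables with finite second moments such that $\mathbb{E}[\hat\theta_u]=\theta_0$ and $\mathbb{E}[\hat\theta_b]=\theta_0+\mu$ for some (arbitrary) $\mu\in\mathbb{R}$. Write $\sigma^2_u=\mathrm{Var}(\hat\theta_u)$, $\sigma^2_b=\mathrm{Var}(\hat\theta_b)$, $\sigma_{bu}=\mathrm{Cov}(\hat\theta_b,\hat\theta_u)$, and assume $\sigma^2_u>0$ and $\sigma^2_u+\sigma^2_b-2\sigma_{bu}>0$. Let $\hat\sigma^2_u,\hat\sigma^2_b,\hat\sigma_{bu}$ be real random variables (on the same probability space) with bounded second moments and satisfying $\hat\sigma^2_u+\hat\sigma^2_b-2\hat\sigma_{bu}>0$ almost surely. Define $$\hat\lambda=\frac{\hat\sigma^2_u-\hat\sigma_{bu}}{(\hat\theta_u-\hat\theta_b)^2+\hat\sigma^2_u+\hat\sigma^2_b-2\hat\sigma_{bu}},\qquad \hat\theta_{\hat\lambda}=\hat\lambda\hat\theta_b+(1-\hat\lambda)\hat\theta_u.$$ Then $$\mathbb{E}\big[(\hat\theta_{\hat\lambda}-\theta_0)^2\big]\le\left(\sigma_u+\frac12\sqrt{\mathbb{E}[S^2]}\right)^2,\qquad\text{where } \mathbb{E}[S^2]=\mathbb{E}\!\left[\frac{(\hat\sigma^2_u-\hat\sigma_{bu})^2}{\hat\sigma^2_u+\hat\sigma^2_b-2\hat\sigma_{bu}}\right].$$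
   Context: $\hat\theta_u$ is an unbiased estimator of $\theta_0$, $\hat\theta_b$ a possibly biased estimator with unknown bias $\mu$, and $\hat\sigma^2_u,\hat\sigma^2_b,\hat\sigma_{bu}$ are estimators of $\mathrm{Var}(\hat\theta_u),\mathrm{Var}(\hat\theta_b),\mathrm{Cov}(\hat\theta_b,\hat\theta_u)$. $\sigma_u=\sqrt{\sigma^2_u}$. *)

theory Defs
  imports "HOL-Probability.Probability"
begin

definition lambda_hat :: "real \<Rightarrow> real \<Rightarrow> real \<Rightarrow> real \<Rightarrow> real \<Rightarrow> real" where
  "lambda_hat tu tb su2 sb2 sbu = (su2 - sbu) / ((tu - tb)^2 + su2 + sb2 - 2 * sbu)"

definition theta_lambda :: "real \<Rightarrow> real \<Rightarrow> real \<Rightarrow> real \<Rightarrow> real \<Rightarrow> real" where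
  "theta_lambda tu tb su2 sb2 sbu =
     (let l = lambda_hat tu tb su2 sb2 sbu in l * tb + (1 - l) * tu)"

end

theory Submission
  imports Defs
begin

text \<open>Write \<open>\<theta>\<^sub>\<lambda> - \<theta>\<^sub>0 = (\<theta>\<^sub>u - \<theta>\<^sub>0) - \<lambda> D\<close> with \<open>D = \<theta>\<^sub>u - \<theta>\<^sub>b\<close>.
  Since \<open>\<lambda> = a / (D\<^sup>2 + d)\<close> with \<open>a = \<sigma>\<^sup>2\<^sub>u - \<sigma>\<^sub>b\<^sub>u\<close> and \<open>d = \<sigma>\<^sup>2\<^sub>u + \<sigma>\<^sup>2\<^sub>b - 2\<sigma>\<^sub>b\<^sub>u > 0\<close>,
  AM-GM (\<open>4 d D\<^sup>2 \<le> (D\<^sup>2 + d)\<^sup>2\<close>) bounds the shrinkage term pointwise by \<open>(\<lambda> D)\<^sup>2 \<le> a\<^sup>2 / (4 d) = S\<^sup>2 / 4\<close>,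
  whatever the value of \<open>D\<close>. Expanding the square with Young's inequality
  \<open>(x - y)\<^sup>2 \<le> (1 + t) x\<^sup>2 + (1 + 1/t) y\<^sup>2\<close> and integrating gives
  \<open>E (\<theta>\<^sub>\<lambda> - \<theta>\<^sub>0)\<^sup>2 \<le> (1 + t) \<sigma>\<^sup>2\<^sub>u + (1 + 1/t) E[S\<^sup>2] / 4\<close> for every \<open>t > 0\<close>, and the
  infimum over \<open>t\<close> of the right-hand side is \<open>(\<sigma>\<^sub>u + \<surd>E[S\<^sup>2] / 2)\<^sup>2\<close>.\<close>

lemma shrinkage_sq_le:
  fixes a D d :: real
  assumes "d > 0"
  shows "(a / (D\<^sup>2 + d) * D)\<^sup>2 \<le> a\<^sup>2 / (4 * d)"
proof -
  have den_pos: "D\<^sup>2 + d > 0"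
    using assms by (simp add: add_nonneg_pos)
  have am_gm: "4 * d * D\<^sup>2 \<le> (D\<^sup>2 + d)\<^sup>2"
    using zero_le_power2[of "D\<^sup>2 - d"] by (simp add: power2_eq_square algebra_simps)
  have "a\<^sup>2 * D\<^sup>2 * (4 * d) \<le> a\<^sup>2 * (D\<^sup>2 + d)\<^sup>2"
    using mult_left_mono[OF am_gm, of "a\<^sup>2"] by (simp add: algebra_simps)
  then show ?thesis
    using den_pos assms by (simp add: power_mult_distrib power_divide divide_simps)
qed

lemma sq_diff_le_weighted:
  fixes x y t :: real
  assumes "t > 0"
  shows "(x - y)\<^sup>2 \<le> (1 + t) * x\<^sup>2 + (1 + 1 / t) * y\<^sup>2"
proof -
  have "- 2 * t * x * y \<le> t\<^sup>2 * x\<^sup>2 + y\<^sup>2"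
    using zero_le_power2[of "t * x + y"] by (simp add: power2_eq_square algebra_simps)
  then have "- 2 * x * y \<le> t * x\<^sup>2 + y\<^sup>2 / t"
    using assms by (simp add: divide_simps power2_eq_square algebra_simps)
  then show ?thesis
    by (simp add: power2_eq_square algebra_simps)
qed

lemma theta_lambda_minus_eq:
  "theta_lambda tu tb su2 sb2 sbu - \<theta> = (tu - \<theta>) - lambda_hat tu tb su2 sb2 sbu * (tu - tb)"
  unfolding theta_lambda_def Let_def by (simp add: algebra_simps)

lemma theta_lambda_sq_err_le:
  fixes tu tb su2 sb2 sbu \<theta> t :: real
  assumes "su2 + sb2 - 2 * sbu > 0" and "t > 0"
  shows "(theta_lambda tu tb su2 sb2 sbu - \<theta>)\<^sup>2
    \<le> (1 + t) * (tu - \<theta>)\<^sup>2 + (1 + 1 / t) / 4 * ((su2 - sbu)\<^sup>2 / (su2 + sb2 - 2 * sbu))"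
proof -
  let ?d = "su2 + sb2 - 2 * sbu"
  have "lambda_hat tu tb su2 sb2 sbu = (su2 - sbu) / ((tu - tb)\<^sup>2 + ?d)"
    unfolding lambda_hat_def by (simp add: algebra_simps)
  then have shrinkage: "(lambda_hat tu tb su2 sb2 sbu * (tu - tb))\<^sup>2 \<le> (su2 - sbu)\<^sup>2 / (4 * ?d)"
    using shrinkage_sq_le[OF assms(1)] by simp
  have "(theta_lambda tu tb su2 sb2 sbu - \<theta>)\<^sup>2
      \<le> (1 + t) * (tu - \<theta>)\<^sup>2 + (1 + 1 / t) * (lambda_hat tu tb su2 sb2 sbu * (tu - tb))\<^sup>2"
    unfolding theta_lambda_minus_eq by (rule sq_diff_le_weighted[OF assms(2)])
  also have "\<dots> \<le> (1 + t) * (tu - \<theta>)\<^sup>2 + (1 + 1 / t) * ((su2 - sbu)\<^sup>2 / (4 * ?d))"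
    using shrinkage assms(2) by (intro add_left_mono mult_left_mono) auto
  finally show ?thesis
    by simp
qed

lemma le_sqrt_add_sq_if_weighted_bound:
  fixes l A B :: real
  assumes "A \<ge> 0" and "B \<ge> 0"
    and bound: "\<And>t. t > 0 \<Longrightarrow> l \<le> (1 + t) * A + (1 + 1 / t) * B"
  shows "l \<le> (sqrt A + sqrt B)\<^sup>2"
proof (cases "A > 0 \<and> B > 0")
  case True
  define a b where "a = sqrt A" and "b = sqrt B"
  have "a > 0" "b > 0" "A = a\<^sup>2" "B = b\<^sup>2"
    using True unfolding a_def b_def by auto
  then have "(1 + b / a) * A + (1 + 1 / (b / a)) * B = (a + b)\<^sup>2"
    by (simp add: field_simps power2_eq_square)
  then show ?thesis
    using bound[of "b / a"] \<open>a > 0\<close> \<open>b > 0\<close> unfolding a_def b_def by simp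
next
  case False
  then have "A = 0 \<or> B = 0"
    using assms by linarith
  then have degenerate: "(sqrt A + sqrt B)\<^sup>2 = A + B"
    using assms by auto
  have "l \<le> A + B + e" if "e > 0" for e
  proof (cases "B = 0")
    case True
    have "e / (A + 1) * A \<le> e"
      using \<open>e > 0\<close> assms(1) by (simp add: divide_simps)
    then show ?thesis
      using bound[of "e / (A + 1)"] \<open>e > 0\<close> assms(1) True by (simp add: algebra_simps)
  next
    case False
    then have "A = 0"
      using \<open>A = 0 \<or> B = 0\<close> by simp
    have "B / ((B + 1) / e) \<le> e"
      using \<open>e > 0\<close> assms(2) by (simp add: divide_simps)
    then show ?thesis
      using bound[of "(B + 1) / e"] \<open>e > 0\<close> assms(2) \<open>A = 0\<close> by (simp add: algebra_simps)
  qed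
  then show ?thesis
    unfolding degenerate by (rule field_le_epsilon)
qed

lemma ennreal_mult_add_mult:
  fixes a b x y :: real
  assumes "a \<ge> 0" "b \<ge> 0" "x \<ge> 0" "y \<ge> 0"
  shows "ennreal a * ennreal x + ennreal b * ennreal y = ennreal (a * x + b * y)"
  using assms by (simp add: ennreal_mult ennreal_plus)

lemma ennreal_le_sqrt_add_sq_if_weighted_bound:
  fixes L :: ennreal and A B :: real
  assumes "A \<ge> 0" and "B \<ge> 0"
    and bound: "\<And>t. t > 0 \<Longrightarrow> L \<le> ennreal ((1 + t) * A + (1 + 1 / t) * B)"
  shows "L \<le> ennreal ((sqrt A + sqrt B)\<^sup>2)"
proof -
  have "L \<noteq> \<top>"
    using bound[of 1] by (auto simp: top_unique)
  then obtain l where l: "L = ennreal l" "l \<ge> 0"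
    by (cases L) auto
  have "l \<le> (1 + t) * A + (1 + 1 / t) * B" if "t > 0" for t
  proof -
    have "0 \<le> (1 + t) * A + (1 + 1 / t) * B"
      using assms(1,2) that by (intro add_nonneg_nonneg mult_nonneg_nonneg) auto
    then show ?thesis
      using bound[OF that] unfolding l(1) by (simp only: ennreal_le_iff)
  qed
  then have "l \<le> (sqrt A + sqrt B)\<^sup>2"
    by (rule le_sqrt_add_sq_if_weighted_bound[OF assms(1,2)])
  then show ?thesis
    unfolding l(1) by (rule ennreal_leI)
qed

lemma nn_integral_theta_lambda_sq_err_le:
  fixes M :: "'a measure" and tu tb su2 sb2 sbu :: "'a \<Rightarrow> real" and \<theta> t :: real
  assumes [measurable]: "tu \<in> borel_measurable M" "su2 \<in> borel_measurable M"
      "sb2 \<in> borel_measurable M" "sbu \<in> borel_measurable M"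
    and pos: "AE x in M. su2 x + sb2 x - 2 * sbu x > 0" and "t > 0"
  shows "(\<integral>\<^sup>+ x. ennreal ((theta_lambda (tu x) (tb x) (su2 x) (sb2 x) (sbu x) - \<theta>)\<^sup>2) \<partial>M)
    \<le> ennreal (1 + t) * (\<integral>\<^sup>+ x. ennreal ((tu x - \<theta>)\<^sup>2) \<partial>M)
      + ennreal ((1 + 1 / t) / 4) * (\<integral>\<^sup>+ x. ennreal ((su2 x - sbu x)\<^sup>2 / (su2 x + sb2 x - 2 * sbu x)) \<partial>M)"
    (is "_ \<le> ennreal ?c1 * _ + ennreal ?c2 * (\<integral>\<^sup>+ x. ennreal (?S x) \<partial>M)")
proof -
  have "(\<integral>\<^sup>+ x. ennreal ((theta_lambda (tu x) (tb x) (su2 x) (sb2 x) (sbu x) - \<theta>)\<^sup>2) \<partial>M)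
      \<le> (\<integral>\<^sup>+ x. ennreal ?c1 * ennreal ((tu x - \<theta>)\<^sup>2) + ennreal ?c2 * ennreal (?S x) \<partial>M)"
  proof (rule nn_integral_mono_AE)
    show "AE x in M. ennreal ((theta_lambda (tu x) (tb x) (su2 x) (sb2 x) (sbu x) - \<theta>)\<^sup>2)
        \<le> ennreal ?c1 * ennreal ((tu x - \<theta>)\<^sup>2) + ennreal ?c2 * ennreal (?S x)"
      using pos
    proof eventually_elim
      case (elim x)
      then have "?S x \<ge> 0"
        by simp
      then show ?case
        using theta_lambda_sq_err_le[OF elim \<open>t > 0\<close>, of "tu x" "tb x" \<theta>] \<open>t > 0\<close>
        by (subst ennreal_mult_add_mult) (auto intro: ennreal_leI)
    qed
  qed
  also have "\<dots> = ennreal ?c1 * (\<integral>\<^sup>+ x. ennreal ((tu x - \<theta>)\<^sup>2) \<partial>M)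
      + ennreal ?c2 * (\<integral>\<^sup>+ x. ennreal (?S x) \<partial>M)"
    by (simp add: nn_integral_add nn_integral_cmult)
  finally show ?thesis .
qed

lemma (in prob_space) nn_integral_sq_dev_eq_variance:
  fixes X :: "'a \<Rightarrow> real"
  assumes [measurable]: "X \<in> borel_measurable M" and "integrable M (\<lambda>x. (X x)\<^sup>2)"
  shows "(\<integral>\<^sup>+ x. ennreal ((X x - expectation X)\<^sup>2) \<partial>M) = ennreal (variance X)"
proof -
  have "integrable M X"
    using assms by (rule square_integrable_imp_integrable)
  then have "integrable M (\<lambda>x. (X x)\<^sup>2 - 2 * expectation X * X x + (expectation X)\<^sup>2)"
    using assms(2) by auto
  also have "(\<lambda>x. (X x)\<^sup>2 - 2 * expectation X * X x + (expectation X)\<^sup>2) = (\<lambda>x. (X x - expectation X)\<^sup>2)"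
    by (simp add: fun_eq_iff power2_diff)
  finally show ?thesis
    by (simp add: nn_integral_eq_integral)
qed

text \<open>Only the measurability of the estimators, \<open>E \<theta>\<^sub>u = \<theta>\<^sub>0\<close>, \<open>\<sigma>\<^sup>2\<^sub>u < \<infinity>\<close> and the a.s.
  positivity of the estimated denominator are needed: the bound on the shrinkage term is
  pointwise in \<open>\<theta>\<^sub>b\<close>.\<close>

theorem theorem3:
  fixes M :: "'a measure" and \<theta>0 \<mu> :: real
    and tu tb su2 sb2 sbu :: "'a \<Rightarrow> real"
  assumes "prob_space M"
    and "tu \<in> borel_measurable M" and "tb \<in> borel_measurable M"
    and "integrable M (\<lambda>x. (tu x)^2)" and "integrable M (\<lambda>x. (tb x)^2)"
    and "prob_space.expectation M tu = \<theta>0"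
    and "prob_space.expectation M tb = \<theta>0 + \<mu>"
    and "prob_space.variance M tu > 0"
    and "prob_space.variance M tu + prob_space.variance M tb
           - 2 * prob_space.expectation M
               (\<lambda>x. (tb x - prob_space.expectation M tb) * (tu x - prob_space.expectation M tu)) > 0"
    and "su2 \<in> borel_measurable M" and "sb2 \<in> borel_measurable M" and "sbu \<in> borel_measurable M"
    and "integrable M (\<lambda>x. (su2 x)^2)" and "integrable M (\<lambda>x. (sb2 x)^2)"
    and "integrable M (\<lambda>x. (sbu x)^2)"
    and "AE x in M. su2 x + sb2 x - 2 * sbu x > 0"
  shows "(\<integral>\<^sup>+ x. ennreal ((su2 x - sbu x)^2 / (su2 x + sb2 x - 2 * sbu x)) \<partial>M) < \<infinity> \<longrightarrow>
         (\<integral>\<^sup>+ x. ennreal ((theta_lambda (tu x) (tb x) (su2 x) (sb2 x) (sbu x) - \<theta>0)^2) \<partial>M)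
           \<le> ennreal ((sqrt (prob_space.variance M tu)
               + sqrt (enn2real (\<integral>\<^sup>+ x. ennreal ((su2 x - sbu x)^2 / (su2 x + sb2 x - 2 * sbu x)) \<partial>M)) / 2)^2)"
proof
  interpret prob_space M by fact
  let ?ES2 = "\<integral>\<^sup>+ x. ennreal ((su2 x - sbu x)\<^sup>2 / (su2 x + sb2 x - 2 * sbu x)) \<partial>M"
  define n where "n = enn2real ?ES2"
  assume "?ES2 < \<infinity>"
  then have ES2: "?ES2 = ennreal n"
    unfolding n_def by (simp add: less_top)
  have variance: "(\<integral>\<^sup>+ x. ennreal ((tu x - \<theta>0)\<^sup>2) \<partial>M) = ennreal (variance tu)"
    using nn_integral_sq_dev_eq_variance[OF assms(2,4)] assms(6) by simp
  have "(\<integral>\<^sup>+ x. ennreal ((theta_lambda (tu x) (tb x) (su2 x) (sb2 x) (sbu x) - \<theta>0)\<^sup>2) \<partial>M)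
      \<le> ennreal ((1 + t) * variance tu + (1 + 1 / t) / 4 * n)" if "t > 0" for t
    using nn_integral_theta_lambda_sq_err_le[OF assms(2,10,11,12,16) that, of tb \<theta>0] that
    unfolding variance ES2
    by (subst (asm) ennreal_mult_add_mult) (auto simp: n_def)
  then have "(\<integral>\<^sup>+ x. ennreal ((theta_lambda (tu x) (tb x) (su2 x) (sb2 x) (sbu x) - \<theta>0)\<^sup>2) \<partial>M)
      \<le> ennreal ((sqrt (variance tu) + sqrt (n / 4))\<^sup>2)"
    by (intro ennreal_le_sqrt_add_sq_if_weighted_bound) (simp_all add: n_def)
  then show "(\<integral>\<^sup>+ x. ennreal ((theta_lambda (tu x) (tb x) (su2 x) (sb2 x) (sbu x) - \<theta>0)\<^sup>2) \<partial>M)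
      \<le> ennreal ((sqrt (variance tu) + sqrt (enn2real ?ES2) / 2)\<^sup>2)"
    by (simp add: n_def real_sqrt_divide)
qed

end
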